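(* Let $k \ge 1$ and $\epsilon > 0$. There does not exist a single-round asymmetric communication protocol with which, given any probability distribution $P$ with entropy $H$ over a set of $n$ possible messages, the server sends $O(n^{1/k - \epsilon})$ bits in the worst case and the client sends at most $kH + o(\log n)$ bits in the expected case (expectation over the client's message drawn from $P$).
   Context: Asymmetric communication problem: a server knows a probability distribution $P$ over a set of $n$ possible messages; a single client holds one message drawn according to $P$ and does not know $P$. The server must learn the client's message. A single-round protocol is one in which the server sends one transmission (which may depend on $P$) to the client, and the client then sends one transmission (depending on the server's transmission and its own message) from which the server must be able to recover the client's message. The entropy is $H = -\sum_x P(x)\log_2 P(x)$. Asymptotic notation $O(\cdot)$, $o(\cdot)$ is with respect to $n \to \infty$, with $k$ and $\epsilon$ fixed. *)

theory Defs
  imports Complex_Main "HOL-Library.Landau_Symbols"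
begin

definition is_distribution :: "nat \<Rightarrow> (nat \<Rightarrow> real) \<Rightarrow> bool" where
  "is_distribution n P \<longleftrightarrow>
     (\<forall>x. 0 \<le> P x) \<and> (\<forall>x. n \<le> x \<longrightarrow> P x = 0) \<and> (\<Sum>x<n. P x) = 1"

text \<open>Shannon entropy in bits (note log 2 0 = 0 in Isabelle, so 0 log 0 = 0).\<close>

definition entropy :: "nat \<Rightarrow> (nat \<Rightarrow> real) \<Rightarrow> real" where
  "entropy n P = - (\<Sum>x<n. P x * log 2 (P x))"

text \<open>A single-round protocol: the server, knowing n and P, sends S n P;
  the client, knowing n, the server's transmission and its message x,
  replies C n s x; the server decodes with D n P s c (it knows P and what it sent).\<close>

definition single_round_protocol ::
  "(nat \<Rightarrow> (nat \<Rightarrow> real) \<Rightarrow> bool list) \<Rightarrow>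
   (nat \<Rightarrow> bool list \<Rightarrow> nat \<Rightarrow> bool list) \<Rightarrow>
   (nat \<Rightarrow> (nat \<Rightarrow> real) \<Rightarrow> bool list \<Rightarrow> bool list \<Rightarrow> nat) \<Rightarrow> bool" where
  "single_round_protocol S C D \<longleftrightarrow>
     (\<forall>n P. is_distribution n P \<longrightarrow>
        (\<forall>x<n. 0 < P x \<longrightarrow> D n P (S n P) (C n (S n P) x) = x))"

end

theory Submission
  imports Defs "HOL-Real_Asymp.Real_Asymp"
begin

text \<open>
  For a set A of a messages let P_A put mass 1/(a+1) on each element of A and spread the
  remaining mass 1/(a+1) evenly over the other n - a messages. Since P_A has full support, the
  client's code for the server's message s = S n P_A is injective on all n messages, so an a-tuple
  of distinct messages is determined by s together with the codewords of its entries, whose total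
  length is at most (a+1) (k H(P_A) + g n) \<le> k (a log2 (2a) + 2 log2 n) + (a+1) g n =: \<Lambda>.
  Weighting codewords by z ^ length with 0 < z < 1/2 (an injective code has total weight at most
  1 / (1 - 2 z)) and counting the at least (n - a) ^ a tuples against the at most 2 ^ (K+1) server
  messages of length at most K gives
    a ln (n - a) \<le> \<Lambda> ln (1/z) + (K + 1) ln 2 + a ln (1 / (1 - 2 z)).
  Take n = m ^ (k q), a = m ^ (q - 2) and z = (1 - 1/m) / 2, with q so large that the server's
  budget n ^ (1/k - \<epsilon>) is at most a. Dividing by a ln m, the left side tends to k q and the
  right side to k (q - 2) + ln 2 + 1, which is smaller since k \<ge> 1.
\<close>

lemma sum_prod_list_lists_length:
  fixes w :: "'a \<Rightarrow> 'b::comm_semiring_1"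
  assumes "finite B"
  shows "(\<Sum>xs | set xs \<subseteq> B \<and> length xs = a. prod_list (map w xs)) = (\<Sum>x\<in>B. w x) ^ a"
proof (induction a)
  case 0
  have "{xs. set xs \<subseteq> B \<and> length xs = 0} = {[]}" by auto
  then show ?case by simp
next
  case (Suc a)
  have "inj_on (\<lambda>(xs, x). x # xs) ({xs. set xs \<subseteq> B \<and> length xs = a} \<times> B)"
    by (rule inj_onI) auto
  then have "(\<Sum>xs | set xs \<subseteq> B \<and> length xs = Suc a. prod_list (map w xs))
      = (\<Sum>(xs, x) \<in> {xs. set xs \<subseteq> B \<and> length xs = a} \<times> B. w x * prod_list (map w xs))"
    unfolding lists_length_Suc_eq by (subst sum.reindex) (simp_all add: case_prod_beta)
  also have "\<dots> = (\<Sum>xs | set xs \<subseteq> B \<and> length xs = a. prod_list (map w xs)) * (\<Sum>x\<in>B. w x)"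
    by (simp add: sum.cartesian_product[symmetric] sum_distrib_left sum_distrib_right mult.commute)
  finally show ?case using Suc by (simp add: mult.commute)
qed

lemma sum_power_length_bool_lists:
  fixes z :: "'a::comm_semiring_1"
  shows "(\<Sum>w::bool list | length w \<le> K. z ^ length w) = (\<Sum>j\<le>K. (2 * z) ^ j)"
proof -
  have fin: "finite {w::bool list. length w = j}" for j
    using finite_lists_length_eq[of "UNIV :: bool set" j] by simp
  have by_length: "{w::bool list. length w \<le> K} = (\<Union>j\<le>K. {w. length w = j})" by auto
  have "(\<Sum>w::bool list | length w \<le> K. z ^ length w) = (\<Sum>j\<le>K. \<Sum>w::bool list | length w = j. z ^ j)"
    unfolding by_length using fin by (subst sum.UNION_disjoint) auto
  also have "\<dots> = (\<Sum>j\<le>K. (2 * z) ^ j)"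
    using card_lists_length_eq[of "UNIV :: bool set"] by (simp add: power_mult_distrib)
  finally show ?thesis .
qed

lemma card_bool_lists_length_le: "card {w::bool list. length w \<le> K} < 2 ^ Suc K"
proof -
  have "card {w::bool list. length w \<le> K} = (\<Sum>j\<le>K. 2 ^ j)"
    using card_lists_length_le[of "UNIV :: bool set" K] by simp
  also have "\<dots> < 2 ^ Suc K" by (induction K) auto
  finally show ?thesis .
qed

lemma sum_power_length_inj_le:
  fixes f :: "'a \<Rightarrow> bool list" and z :: real
  assumes "finite A" "inj_on f A" "0 \<le> z" "z < 1/2"
  shows "(\<Sum>x\<in>A. z ^ length (f x)) \<le> 1 / (1 - 2 * z)"
proof -
  define K where "K = Max (length ` f ` A)"
  have "f ` A \<subseteq> {w. length w \<le> K}"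
    using assms(1) by (auto simp: K_def)
  moreover have "finite {w::bool list. length w \<le> K}"
    using finite_lists_length_le[of "UNIV :: bool set" K] by simp
  ultimately have "(\<Sum>x\<in>A. z ^ length (f x)) \<le> (\<Sum>w::bool list | length w \<le> K. z ^ length w)"
    using assms by (subst sum.reindex[symmetric, OF assms(2), unfolded comp_def])
      (auto intro: sum_mono2)
  also have "\<dots> = (\<Sum>j<Suc K. (2 * z) ^ j)"
    by (simp add: sum_power_length_bool_lists lessThan_Suc_atMost)
  also have "\<dots> \<le> (\<Sum>j. (2 * z) ^ j)"
    using assms by (intro sum_le_suminf summable_geometric) auto
  also have "\<dots> = 1 / (1 - 2 * z)"
    using assms by (subst suminf_geometric) auto
  finally show ?thesis .
qed

lemma card_mult_powr_le_card_image:
  fixes \<sigma> :: "'a list \<Rightarrow> 's" and F :: "'s \<Rightarrow> 'a \<Rightarrow> bool list" and z \<Lambda> :: real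
  assumes B: "finite B"
    and X: "X \<subseteq> {xs. set xs \<subseteq> B \<and> length xs = a \<and> distinct xs}"
    and inj: "\<And>xs. xs \<in> X \<Longrightarrow> inj_on (F (\<sigma> xs)) B"
    and total: "\<And>xs. xs \<in> X \<Longrightarrow> real (\<Sum>x\<in>set xs. length (F (\<sigma> xs) x)) \<le> \<Lambda>"
    and z: "0 < z" "z < 1/2"
  shows "real (card X) * z powr \<Lambda> \<le> real (card (\<sigma> ` X)) * (1 / (1 - 2 * z)) ^ a"
proof -
  define L where "L = {xs. set xs \<subseteq> B \<and> length xs = a}"
  define \<Phi> where "\<Phi> s xs = prod_list (map (\<lambda>x. z ^ length (F s x)) xs)" for s xs
  have "finite L" unfolding L_def using B by (rule finite_lists_length_eq)
  moreover have XL: "X \<subseteq> L" using X unfolding L_def by auto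
  ultimately have "finite X" by (rule finite_subset[rotated])
  have \<Phi>_nonneg: "0 \<le> \<Phi> s xs" for s xs
    unfolding \<Phi>_def using z by (intro prod_list_nonneg) auto
  have weight: "z powr \<Lambda> \<le> (\<Sum>s\<in>\<sigma> ` X. \<Phi> s xs)" if "xs \<in> X" for xs
  proof -
    let ?N = "\<Sum>x\<in>set xs. length (F (\<sigma> xs) x)"
    have "z powr \<Lambda> \<le> z ^ ?N"
      using total[OF that] z by (simp add: powr_realpow[symmetric] powr_mono')
    also have "\<dots> = \<Phi> (\<sigma> xs) xs"
      using that X by (auto simp: \<Phi>_def power_sum prod.distinct_set_conv_list)
    also have "\<dots> \<le> (\<Sum>s\<in>\<sigma> ` X. \<Phi> s xs)"
      using that \<open>finite X\<close> \<Phi>_nonneg by (intro member_le_sum) auto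
    finally show ?thesis .
  qed
  have "real (card X) * z powr \<Lambda> \<le> (\<Sum>xs\<in>X. \<Sum>s\<in>\<sigma> ` X. \<Phi> s xs)"
    using weight sum_mono[of X "\<lambda>_. z powr \<Lambda>"] by simp
  also have "\<dots> = (\<Sum>s\<in>\<sigma> ` X. \<Sum>xs\<in>X. \<Phi> s xs)" by (rule sum.swap)
  also have "\<dots> \<le> (\<Sum>s\<in>\<sigma> ` X. \<Sum>xs\<in>L. \<Phi> s xs)"
    using \<open>finite L\<close> XL \<Phi>_nonneg by (intro sum_mono sum_mono2) auto
  also have "\<dots> = (\<Sum>s\<in>\<sigma> ` X. (\<Sum>x\<in>B. z ^ length (F s x)) ^ a)"
    unfolding L_def \<Phi>_def using B by (simp add: sum_prod_list_lists_length)
  also have "\<dots> \<le> (\<Sum>s\<in>\<sigma> ` X. (1 / (1 - 2 * z)) ^ a)"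
    using B inj z by (intro sum_mono power_mono sum_power_length_inj_le sum_nonneg) auto
  finally show ?thesis by simp
qed

definition hard_distribution :: "nat \<Rightarrow> nat set \<Rightarrow> nat \<Rightarrow> real" where
  "hard_distribution n A x =
     (if x < n then if x \<in> A then 1 / (real (card A) + 1)
                    else 1 / ((real (card A) + 1) * (real n - real (card A)))
      else 0)"

context
  fixes n :: nat and A :: "nat set"
  assumes A: "A \<subseteq> {..<n}" "card A < n"
begin

lemma sum_hard_distribution:
  "(\<Sum>x<n. h (hard_distribution n A x))
     = real (card A) * h (1 / (real (card A) + 1))
       + (real n - real (card A)) * h (1 / ((real (card A) + 1) * (real n - real (card A))))"
proof -
  have "real (card ({..<n} - A)) = real n - real (card A)"
    using A by (simp add: card_Diff_subset finite_subset of_nat_diff)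
  moreover have "(\<Sum>x<n. h (hard_distribution n A x))
      = (\<Sum>x\<in>A. h (1 / (real (card A) + 1)))
        + (\<Sum>x\<in>{..<n} - A. h (1 / ((real (card A) + 1) * (real n - real (card A)))))"
    using A by (subst sum.subset_diff[of A]) (auto simp: hard_distribution_def subset_iff intro!: sum.cong)
  ultimately show ?thesis by simp
qed

lemma hard_distribution_pos: "x < n \<Longrightarrow> 0 < hard_distribution n A x"
  using A by (simp add: hard_distribution_def)

lemma is_distribution_hard_distribution: "is_distribution n (hard_distribution n A)"
proof -
  have "(\<Sum>x<n. hard_distribution n A x) = 1"
    using A by (simp add: sum_hard_distribution[of id, simplified] field_simps)
  then show ?thesis
    using A by (auto simp: is_distribution_def hard_distribution_def)
qed

lemma entropy_hard_distribution:
  "entropy n (hard_distribution n A)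
     = (real (card A) * log 2 (real (card A) + 1)
        + log 2 ((real (card A) + 1) * (real n - real (card A)))) / (real (card A) + 1)"
proof -
  define a where "a = real (card A)"
  define b where "b = real n - a"
  have "0 \<le> a" "0 < b" using A by (simp_all add: a_def b_def)
  have log_recip: "log 2 (1 / x) = - log 2 x" for x :: real
    by (metis log_inverse inverse_eq_divide)
  have "entropy n (hard_distribution n A)
      = - (a * (1 / (a + 1) * log 2 (1 / (a + 1))) + b * (1 / ((a + 1) * b) * log 2 (1 / ((a + 1) * b))))"
    unfolding entropy_def a_def b_def by (rule arg_cong[where f = uminus], rule sum_hard_distribution)
  also have "\<dots> = (a * log 2 (a + 1) + log 2 ((a + 1) * b)) / (a + 1)"
    using \<open>0 \<le> a\<close> \<open>0 < b\<close> unfolding log_recip by (simp add: add_divide_distrib)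
  finally show ?thesis unfolding a_def b_def .
qed

lemma sum_le_expectation_hard_distribution:
  assumes "\<And>x. 0 \<le> f x"
  shows "(\<Sum>x\<in>A. f x) \<le> (real (card A) + 1) * (\<Sum>x<n. hard_distribution n A x * f x)"
proof -
  have "(\<Sum>x<n. hard_distribution n A x * f x) = (\<Sum>x\<in>A. f x) / (real (card A) + 1)
          + (\<Sum>x\<in>{..<n} - A. hard_distribution n A x * f x)"
    using A by (subst sum.subset_diff[of A])
      (auto simp: hard_distribution_def sum_divide_distrib subset_iff intro!: sum.cong)
  moreover have "0 \<le> (\<Sum>x\<in>{..<n} - A. hard_distribution n A x * f x)"
    using assms hard_distribution_pos by (intro sum_nonneg) (simp add: less_imp_le)
  ultimately show ?thesis by (simp add: field_simps)
qed

end

lemma entropy_hard_distribution_le: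
  assumes "A \<subseteq> {..<n}" "1 \<le> card A" "card A < n"
  shows "(real (card A) + 1) * entropy n (hard_distribution n A)
           \<le> real (card A) * log 2 (2 * real (card A)) + 2 * log 2 (real n)"
proof -
  define a where "a = real (card A)"
  have a: "1 \<le> a" "a + 1 \<le> real n" using assms by (auto simp: a_def)
  have "log 2 (a + 1) \<le> log 2 (2 * a)" using a by simp
  then have "a * log 2 (a + 1) \<le> a * log 2 (2 * a)" using a by simp
  moreover have "log 2 ((a + 1) * (real n - a)) \<le> log 2 (real n * real n)"
    using a by (intro log_le_cancel_iff[THEN iffD2] mult_mono) auto
  moreover have "log 2 (real n * real n) = 2 * log 2 (real n)"
    using a by (simp add: log_mult)
  moreover have "(a + 1) * entropy n (hard_distribution n A)
      = a * log 2 (a + 1) + log 2 ((a + 1) * (real n - a))"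
    using entropy_hard_distribution[OF assms(1,3)] a by (simp add: a_def)
  ultimately show ?thesis by (simp add: a_def)
qed

lemma single_round_protocol_inj:
  assumes "single_round_protocol S C D" "is_distribution n P" "\<And>x. x < n \<Longrightarrow> 0 < P x"
  shows "inj_on (C n (S n P)) {..<n}"
proof (rule inj_on_inverseI)
  fix x assume "x \<in> {..<n}"
  then show "D n P (S n P) (C n (S n P) x) = x"
    using assms unfolding single_round_protocol_def by auto
qed

lemma card_distinct_lists_ge:
  assumes "finite B" "a \<le> card B"
  shows "(card B - a) ^ a \<le> card {xs. length xs = a \<and> distinct xs \<and> set xs \<subseteq> B}"
proof -
  have "(card B - a) ^ a = (\<Prod>i\<in>{card B - a + 1..card B}. card B - a)"
    using assms by simp
  also have "\<dots> \<le> \<Prod>{card B - a + 1..card B}" by (intro prod_mono) auto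
  finally show ?thesis using card_lists_distinct_length_eq[OF assms] by simp
qed

context
  fixes S :: "nat \<Rightarrow> (nat \<Rightarrow> real) \<Rightarrow> bool list" and C and D and n K a :: nat and k G :: real
  assumes protocol: "single_round_protocol S C D"
    and server: "\<And>P. is_distribution n P \<Longrightarrow> length (S n P) \<le> K"
    and client: "\<And>P. is_distribution n P \<Longrightarrow>
                   (\<Sum>x<n. P x * real (length (C n (S n P) x))) \<le> k * entropy n P + G"
    and k: "0 \<le> k" and a: "1 \<le> a" "a < n"
begin

lemma client_code_length_sum_le:
  assumes xs: "length xs = a" "distinct xs" "set xs \<subseteq> {..<n}"
  defines "s \<equiv> S n (hard_distribution n (set xs))"
  shows "real (\<Sum>x\<in>set xs. length (C n s x))
           \<le> k * (a * log 2 (2 * real a) + 2 * log 2 n) + (real a + 1) * G"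
proof -
  let ?P = "hard_distribution n (set xs)"
  have card: "card (set xs) = a" using xs by (simp add: distinct_card)
  have "real (\<Sum>x\<in>set xs. length (C n s x))
          \<le> (real a + 1) * (\<Sum>x<n. ?P x * real (length (C n s x)))"
    using sum_le_expectation_hard_distribution[of "set xs" n "\<lambda>x. real (length (C n s x))"]
      xs card a by simp
  also have "\<dots> \<le> (real a + 1) * (k * entropy n ?P + G)"
    using client is_distribution_hard_distribution[of "set xs" n] xs card a
    by (simp add: s_def)
  also have "\<dots> = k * ((real a + 1) * entropy n ?P) + (real a + 1) * G"
    by (simp add: algebra_simps)
  also have "\<dots> \<le> k * (a * log 2 (2 * real a) + 2 * log 2 n) + (real a + 1) * G"
    using entropy_hard_distribution_le[of "set xs" n] xs card a k
    by (intro add_right_mono mult_left_mono) auto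
  finally show ?thesis .
qed

lemma protocol_counting_bound:
  fixes z :: real
  assumes z: "0 < z" "z < 1/2"
  shows "real (card {xs. length xs = a \<and> distinct xs \<and> set xs \<subseteq> {..<n}})
           * z powr (k * (a * log 2 (2 * real a) + 2 * log 2 n) + (real a + 1) * G)
         \<le> 2 ^ Suc K * (1 / (1 - 2 * z)) ^ a"
proof -
  define X where "X = {xs. length xs = a \<and> distinct xs \<and> set xs \<subseteq> {..<n}}"
  define \<sigma> where "\<sigma> xs = S n (hard_distribution n (set xs))" for xs
  have hard: "set xs \<subseteq> {..<n}" "card (set xs) = a" if "xs \<in> X" for xs
    using that by (auto simp: X_def distinct_card)
  have dist: "is_distribution n (hard_distribution n (set xs))" if "xs \<in> X" for xs
    using hard[OF that] a by (intro is_distribution_hard_distribution) auto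
  have "real (card X) * z powr (k * (a * log 2 (2 * real a) + 2 * log 2 n) + (real a + 1) * G)
          \<le> real (card (\<sigma> ` X)) * (1 / (1 - 2 * z)) ^ a"
  proof (rule card_mult_powr_le_card_image[where B = "{..<n}" and F = "C n"])
    fix xs assume xs: "xs \<in> X"
    show "inj_on (C n (\<sigma> xs)) {..<n}"
      unfolding \<sigma>_def using hard[OF xs] a
      by (intro single_round_protocol_inj[OF protocol dist[OF xs]] hard_distribution_pos) auto
    show "real (\<Sum>x\<in>set xs. length (C n (\<sigma> xs) x))
            \<le> k * (a * log 2 (2 * real a) + 2 * log 2 n) + (real a + 1) * G"
      using xs unfolding X_def \<sigma>_def by (intro client_code_length_sum_le) auto
  qed (use z in \<open>auto simp: X_def\<close>)
  also have "\<dots> \<le> 2 ^ Suc K * (1 / (1 - 2 * z)) ^ a"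
  proof (rule mult_right_mono)
    have "\<sigma> ` X \<subseteq> {s. length s \<le> K}"
      using server dist by (auto simp: \<sigma>_def)
    then have "card (\<sigma> ` X) \<le> card {s::bool list. length s \<le> K}"
      using finite_lists_length_le[of "UNIV :: bool set" K] by (intro card_mono) auto
    then have "card (\<sigma> ` X) \<le> 2 ^ Suc K"
      using card_bool_lists_length_le[of K] by linarith
    then show "real (card (\<sigma> ` X)) \<le> 2 ^ Suc K"
      by (metis of_nat_le_iff of_nat_numeral of_nat_power)
  qed (use z in auto)
  finally show ?thesis unfolding X_def .
qed

lemma protocol_log_bound:
  fixes z :: real
  assumes z: "0 < z" "z < 1/2"
  shows "a * ln (real n - a)
           \<le> (k * (a * log 2 (2 * real a) + 2 * log 2 n) + (real a + 1) * G) * ln (1 / z)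
             + (K + 1) * ln 2 + a * ln (1 / (1 - 2 * z))"
proof -
  define \<Lambda> where "\<Lambda> = k * (a * log 2 (2 * real a) + 2 * log 2 n) + (real a + 1) * G"
  define tuples where "tuples = real (card {xs. length xs = a \<and> distinct xs \<and> set xs \<subseteq> {..<n}})"
  have "real ((n - a) ^ a) \<le> tuples"
    using card_distinct_lists_ge[of "{..<n}" a] a unfolding tuples_def of_nat_le_iff by simp
  then have tuples: "(real n - a) ^ a \<le> tuples" using a by (simp add: of_nat_diff)
  have pos: "0 < (real n - a) ^ a" using a by simp
  have "a * ln (real n - a) = ln ((real n - a) ^ a)"
    using a by (simp add: ln_realpow)
  also have "\<dots> \<le> ln tuples" using tuples pos by simp
  also have "\<dots> \<le> ln (2 ^ Suc K * (1 / (1 - 2 * z)) ^ a) - \<Lambda> * ln z"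
  proof -
    have "ln (tuples * z powr \<Lambda>) \<le> ln (2 ^ Suc K * (1 / (1 - 2 * z)) ^ a)"
      using protocol_counting_bound[OF z] tuples pos z by (simp add: tuples_def \<Lambda>_def)
    then show ?thesis using tuples pos z by (simp add: ln_mult ln_powr)
  qed
  finally show ?thesis
    using z by (simp add: \<Lambda>_def ln_mult ln_realpow ln_div algebra_simps)
qed

end

text \<open>An upper bound for the right-hand side of protocol_log_bound with n = m ^ (k * q),
  a = m ^ (q - 2) and z = (1 - 1 / m) / 2,
  divided by a * ln m, when the client's slack is at most ln m / 2 and the server sends at most c * a bits.\<close>

definition scaled_bound :: "nat \<Rightarrow> nat \<Rightarrow> real \<Rightarrow> nat \<Rightarrow> real" where
  "scaled_bound k q c m =
     (real k * (1 / ln m + (real q - 2) / ln 2 + 2 * real k * real q / (m * ln 2)) + 1)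
       * ln (2 / (1 - 1 / m)) + (c + 1) * ln 2 / ln m + 1"

lemma scaled_bound_tendsto:
  "(scaled_bound k q c \<longlongrightarrow> (real k * (real q - 2) / ln 2 + 1) * ln 2 + 1) sequentially"
  unfolding scaled_bound_def by real_asymp

lemma scale_powers_le:
  fixes k q m :: nat
  assumes k: "1 \<le> k" and q: "3 \<le> q" and m: "2 \<le> m"
  shows "m \<le> m ^ (q - 2)" and "2 * m ^ (q - 2) \<le> m ^ (k * q)"
proof -
  show "m \<le> m ^ (q - 2)"
    using power_increasing[of 1 "q - 2" m] m q by simp
  have "Suc (q - 2) \<le> k * q" using k q by (simp add: Suc_diff_le le_trans[OF _ mult_le_mono1[OF k]])
  then have "m ^ Suc (q - 2) \<le> m ^ (k * q)" by (rule power_increasing) (use m in simp)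
  then show "2 * m ^ (q - 2) \<le> m ^ (k * q)"
    using m by (simp add: order.trans[OF mult_le_mono1])
qed

lemma client_budget_le:
  fixes k q m :: nat and G :: real
  assumes k: "1 \<le> k" and q: "3 \<le> q" and m: "2 \<le> m" and G: "G \<le> ln (real m) / 2"
  defines "a \<equiv> m ^ (q - 2)" and "n \<equiv> m ^ (k * q)"
  shows "real k * (a * log 2 (2 * real a) + 2 * log 2 n) + (real a + 1) * G
           \<le> a * ln m * (real k * (1 / ln m + (real q - 2) / ln 2 + 2 * real k * real q / (m * ln 2)) + 1)"
proof -
  define u where "u = ln (real m)"
  have u: "0 < u" unfolding u_def using m by simp
  have am: "real m \<le> a" "1 \<le> real a"
    using scale_powers_le(1)[OF k q m] m unfolding a_def by simp_all
  have "a * log 2 (2 * real a) = a * u * (1 / u + (real q - 2) / ln 2)"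
    using u am q by (simp add: a_def u_def log_def ln_mult ln_realpow field_simps)
  moreover have "2 * log 2 n \<le> a * u * (2 * real k * real q / (m * ln 2))"
  proof -
    have "2 * log 2 n = u * (2 * real k * real q / ln 2)"
      by (simp add: n_def u_def log_def ln_realpow)
    also have "\<dots> \<le> u * (2 * real k * real q / ln 2) * (a / m)"
      using mult_left_mono[of 1 "a / m" "u * (2 * real k * real q / ln 2)"] am m u by simp
    finally show ?thesis by (simp add: field_simps)
  qed
  ultimately have "real k * (a * log 2 (2 * real a) + 2 * log 2 n)
      \<le> real k * (a * u * (1 / u + (real q - 2) / ln 2) + a * u * (2 * real k * real q / (m * ln 2)))"
    by (intro mult_left_mono) auto
  moreover have "(real a + 1) * G \<le> a * u"
  proof (cases "G \<le> 0")
    case True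
    then have "(real a + 1) * G \<le> 0" by (intro mult_nonneg_nonpos) auto
    also have "0 \<le> a * u" using u by simp
    finally show ?thesis .
  next
    case False
    then have "(real a + 1) * G \<le> (2 * a) * G" using am by (intro mult_right_mono) auto
    also have "\<dots> \<le> (2 * a) * (u / 2)" using G by (intro mult_left_mono) (auto simp: u_def)
    finally show ?thesis by simp
  qed
  moreover have "a * u * (real k * (1 / u + (real q - 2) / ln 2 + 2 * real k * real q / (m * ln 2)) + 1)
      = real k * (a * u * (1 / u + (real q - 2) / ln 2) + a * u * (2 * real k * real q / (m * ln 2)))
        + a * u"
    by (simp add: algebra_simps)
  ultimately show ?thesis unfolding u_def[symmetric] by linarith
qed

lemma protocol_scaled_bound:
  fixes S :: "nat \<Rightarrow> (nat \<Rightarrow> real) \<Rightarrow> bool list" and k q m n K :: nat and c G :: real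
  assumes protocol: "single_round_protocol S C D"
    and server: "\<And>P. is_distribution n P \<Longrightarrow> length (S n P) \<le> K"
    and client: "\<And>P. is_distribution n P \<Longrightarrow>
                   (\<Sum>x<n. P x * real (length (C n (S n P) x))) \<le> real k * entropy n P + G"
    and k: "1 \<le> k" and q: "3 \<le> q" and m: "2 \<le> m" and n: "n = m ^ (k * q)"
    and K: "real K \<le> c * real m ^ (q - 2)"
    and G: "G \<le> ln (real m) / 2"
  shows "real k * real q - ln 2 / ln m \<le> scaled_bound k q c m"
proof -
  define a where "a = m ^ (q - 2)"
  define u where "u = ln (real m)"
  define z :: real where "z = (1 - 1 / m) / 2"
  define \<phi> where "\<phi> = real k * (1 / u + (real q - 2) / ln 2 + 2 * real k * real q / (m * ln 2)) + 1"
  have u: "0 < u" unfolding u_def using m by simp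
  have am: "1 \<le> real a" "2 * a \<le> n"
    using scale_powers_le[OF k q m] m unfolding a_def n by simp_all
  have z: "0 < z" "z < 1/2" "1 - 2 * z = 1 / m" "1 / z = 2 / (1 - 1 / m)"
    unfolding z_def using m by (auto simp: field_simps)
  have "a * u * (real k * real q - ln 2 / u) = a * (ln (real n) - ln 2)"
    using u by (simp add: n u_def ln_realpow field_simps)
  also have "\<dots> \<le> a * ln (real n - a)"
  proof (rule mult_left_mono)
    have "ln (real n) - ln 2 = ln (real n / 2)" using am by (simp add: ln_div)
    also have "\<dots> \<le> ln (real n - a)" using am by simp
    finally show "ln (real n) - ln 2 \<le> ln (real n - a)" .
  qed simp
  also have "\<dots> \<le> (real k * (a * log 2 (2 * real a) + 2 * log 2 n) + (real a + 1) * G) * ln (1 / z)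
        + (K + 1) * ln 2 + a * ln (1 / (1 - 2 * z))"
    using am by (intro protocol_log_bound[OF protocol server client] z) auto
  also have "\<dots> \<le> a * u * \<phi> * ln (1 / z) + a * u * ((c + 1) * ln 2 / u) + a * u"
  proof -
    have "(real k * (a * log 2 (2 * real a) + 2 * log 2 n) + (real a + 1) * G) * ln (1 / z)
        \<le> a * u * \<phi> * ln (1 / z)"
      using client_budget_le[OF k q m G] z unfolding a_def n u_def \<phi>_def
      by (intro mult_right_mono) auto
    moreover have "(K + 1) * ln 2 \<le> a * u * ((c + 1) * ln 2 / u)"
    proof -
      have "real (K + 1) \<le> (c + 1) * a" using K am by (simp add: a_def algebra_simps)
      then have "(K + 1) * ln 2 \<le> (c + 1) * a * ln 2" by (rule mult_right_mono) simp
      then show ?thesis using u by (simp add: mult.commute)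
    qed
    moreover have "a * ln (1 / (1 - 2 * z)) = a * u"
      using z m unfolding u_def by simp
    ultimately show ?thesis by linarith
  qed
  also have "\<dots> = a * u * (\<phi> * ln (1 / z) + (c + 1) * ln 2 / u + 1)"
    by (simp add: algebra_simps)
  finally show ?thesis
    using am u z(4) by (simp add: scaled_bound_def \<phi>_def u_def mult_le_cancel_left_pos)
qed

lemma server_budget_le:
  fixes k q m :: nat and \<epsilon> :: real
  assumes k: "1 \<le> k" and q: "2 \<le> q" and m: "1 \<le> m" and kq\<epsilon>: "2 \<le> real k * real q * \<epsilon>"
  shows "real (m ^ (k * q)) powr (1 / real k - \<epsilon>) \<le> real m ^ (q - 2)"
proof -
  have "real (k * q) * (1 / real k - \<epsilon>) = real q - real k * real q * \<epsilon>"
    using k by (simp add: field_simps)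
  then have "real (m ^ (k * q)) powr (1 / real k - \<epsilon>) = real m powr (real q - real k * real q * \<epsilon>)"
    using m by (simp add: powr_realpow[symmetric] powr_powr)
  also have "\<dots> \<le> real m powr (real q - 2)"
    using m kq\<epsilon> by (intro powr_mono) auto
  also have "\<dots> = real m ^ (q - 2)"
    using m q by (simp add: powr_realpow[symmetric] of_nat_diff)
  finally show ?thesis .
qed

lemma eventually_protocol_scaled_bound:
  fixes S :: "nat \<Rightarrow> (nat \<Rightarrow> real) \<Rightarrow> bool list" and g :: "nat \<Rightarrow> real"
    and k q N :: nat and c \<epsilon> :: real
  assumes protocol: "single_round_protocol S C D"
    and server: "\<And>n P. N \<le> n \<Longrightarrow> is_distribution n P \<Longrightarrow>
                   real (length (S n P)) \<le> c * real n powr (1 / real k - \<epsilon>)"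
    and client: "\<And>n P. is_distribution n P \<Longrightarrow>
                   (\<Sum>x<n. P x * real (length (C n (S n P) x))) \<le> real k * entropy n P + g n"
    and g: "g \<in> o(\<lambda>n. ln (real n))"
    and k: "1 \<le> k" and q: "3 \<le> q" and kq\<epsilon>: "2 \<le> real k * real q * \<epsilon>"
  shows "\<forall>\<^sub>F m in sequentially. real k * real q - ln 2 / ln m \<le> scaled_bound k q \<bar>c\<bar> m"
proof -
  have "\<forall>\<^sub>F n in sequentially. \<bar>g n\<bar> \<le> 1 / (2 * real k * real q) * \<bar>ln (real n)\<bar>"
    using landau_o.smallD[OF g, of "1 / (2 * real k * real q)"] k q by simp
  then obtain N' where N': "\<And>n. N' \<le> n \<Longrightarrow> \<bar>g n\<bar> \<le> 1 / (2 * real k * real q) * \<bar>ln (real n)\<bar>"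
    by (auto simp: eventually_sequentially)
  have "real k * real q - ln 2 / ln m \<le> scaled_bound k q \<bar>c\<bar> m" if m: "max 2 (max N N') \<le> m" for m
  proof -
    define n where "n = m ^ (k * q)"
    define K where "K = nat \<lfloor>\<bar>c\<bar> * real m ^ (q - 2)\<rfloor>"
    have m2: "2 \<le> m" using m by simp
    have "m \<le> n" using scale_powers_le[OF k q m2] unfolding n_def by linarith
    then have n: "N \<le> n" "N' \<le> n" using m by auto
    have n_powr: "real n powr (1 / real k - \<epsilon>) \<le> real m ^ (q - 2)"
      unfolding n_def using k q m kq\<epsilon> by (intro server_budget_le) auto
    have server_n: "length (S n P) \<le> K" if "is_distribution n P" for P
    proof -
      have "real (length (S n P)) \<le> c * real n powr (1 / real k - \<epsilon>)"
        using server[OF n(1) that] .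
      also have "\<dots> \<le> \<bar>c\<bar> * real n powr (1 / real k - \<epsilon>)"
        by (intro mult_right_mono) auto
      also have "\<dots> \<le> \<bar>c\<bar> * real m ^ (q - 2)"
        using n_powr by (intro mult_left_mono) auto
      finally show ?thesis unfolding K_def by (rule le_nat_floor)
    qed
    have "g n \<le> 1 / (2 * real k * real q) * \<bar>ln (real n)\<bar>"
      using N'[OF n(2)] by linarith
    also have "\<dots> = ln (real m) / 2"
      using k q m by (simp add: n_def ln_realpow)
    finally have "g n \<le> ln (real m) / 2" .
    moreover have "real K \<le> \<bar>c\<bar> * real m ^ (q - 2)"
      unfolding K_def by (intro of_nat_floor) simp
    ultimately show ?thesis
      using protocol_scaled_bound[OF protocol server_n client k q m2 n_def] by blast
  qed
  then show ?thesis unfolding eventually_sequentially by blast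
qed

theorem theorem2:
  fixes k :: nat and \<epsilon> :: real
  assumes "k \<ge> 1" and "\<epsilon> > 0"
  shows "\<not> (\<exists>S C D. single_round_protocol S C D
            \<and> (\<exists>c N. \<forall>n\<ge>N. \<forall>P. is_distribution n P \<longrightarrow>
                   real (length (S n P)) \<le> c * real n powr (1 / real k - \<epsilon>))
            \<and> (\<exists>g :: nat \<Rightarrow> real. g \<in> o(\<lambda>n. ln (real n)) \<and>
                 (\<forall>n P. is_distribution n P \<longrightarrow>
                    (\<Sum>x<n. P x * real (length (C n (S n P) x)))
                      \<le> real k * entropy n P + g n)))"
proof (intro notI, elim exE conjE)
  fix S C D c N and g :: "nat \<Rightarrow> real"
  assume protocol: "single_round_protocol S C D"
    and server: "\<forall>n\<ge>N. \<forall>P. is_distribution n P \<longrightarrow>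
                   real (length (S n P)) \<le> c * real n powr (1 / real k - \<epsilon>)"
    and g: "g \<in> o(\<lambda>n. ln (real n))"
    and client: "\<forall>n P. is_distribution n P \<longrightarrow>
                   (\<Sum>x<n. P x * real (length (C n (S n P) x))) \<le> real k * entropy n P + g n"
  \<comment> \<open>For n = m ^ (k * q), this q makes the server budget n powr (1 / k - \<epsilon>) at most m ^ (q - 2).\<close>
  define q where "q = nat \<lceil>2 / (real k * \<epsilon>)\<rceil> + 3"
  have "2 / (real k * \<epsilon>) \<le> real q" unfolding q_def by linarith
  then have "2 \<le> real k * real q * \<epsilon>" using assms by (simp add: field_simps)
  then have "\<forall>\<^sub>F m in sequentially. real k * real q - ln 2 / ln m \<le> scaled_bound k q \<bar>c\<bar> m"
    using assms(1) protocol server client g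
    by (intro eventually_protocol_scaled_bound) (auto simp: q_def)
  moreover have "((\<lambda>m. real k * real q - ln 2 / ln (real m)) \<longlongrightarrow> real k * real q) sequentially"
    by real_asymp
  ultimately have "real k * real q \<le> (real k * (real q - 2) / ln 2 + 1) * ln 2 + 1"
    using scaled_bound_tendsto by (intro tendsto_le[OF trivial_limit_sequentially])
  also have "\<dots> = real k * real q - 2 * real k + ln 2 + 1" by (simp add: field_simps)
  finally show False using assms(1) ln_2_less_1 by simp
qed

end
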